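(* Let $G\subset\mathrm{SU}(2)$ be a finite nontrivial subgroup, $H=P(G)$, and let $f$ be an $H$-invariant Morse–Smale function on $S^2$ whose critical set equals the fixed-point set $\mathrm{Fix}(H)=\{p\in S^2: |H_p|>1\}$. Let $\varepsilon>0$ be small, $p$ a critical point of $f$, and $\gamma_p$ the embedded Reeb orbit of $\lambda_\varepsilon$ over $p$ (namely $t\mapsto e^{it/(1+\varepsilon f(p))}z$, $t\in[0,2\pi(1+\varepsilon f(p))]$, $z\in\mathfrak{P}^{-1}(p)$). Then the multiplicity of the Reeb orbit $\pi_G\circ\gamma_p$ of $\lambda_{G,\varepsilon}$ is $2|H_p|$ if $|G|$ is even, and $|H_p|$ if $|G|$ is odd.
   Context: $S^3\subset\mathbb{C}^2$ with $\lambda=\frac12\sum(x_kdy_k-y_kdx_k)|_{S^3}$; $\mathfrak{P}:S^3\to S^2$ the Hopf fibration; $P:\mathrm{SU}(2)\to\mathrm{SO}(3)$ the standard double cover (kernel $\{\pm\mathrm{Id}\}$); $H$ acts on $S^2$ by rotations, $H_p$ is the isotropy subgroup of $p$. $\lambda_\varepsilon=((1+\varepsilon f)\circ\mathfrak{P})\lambda$; $\pi_G:S^3\to S^3/G$ the quotient; $\lambda_{G,\varepsilon}$ is the contact form on $S^3/G$ with $\pi_G^*\lambda_{G,\varepsilon}=\lambda_\varepsilon$ (well defined since $f$ is $H$-invariant). The multiplicity of a Reeb orbit is the integer $m$ such that it is the $m$-fold iterate of an embedded Reeb orbit. *)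

theory Defs
  imports "HOL-Analysis.Analysis"
begin

primrec ck_on :: "nat \<Rightarrow> 'a::euclidean_space set \<Rightarrow> ('a \<Rightarrow> real) \<Rightarrow> bool" where
  "ck_on 0 U f = continuous_on U f"
| "ck_on (Suc k) U f =
     (\<exists>D :: 'a \<Rightarrow> 'a \<Rightarrow> real.
        (\<forall>x\<in>U. (f has_derivative (\<lambda>v. \<Sum>b\<in>Basis. (v \<bullet> b) * D b x)) (at x))
        \<and> (\<forall>b\<in>Basis. ck_on k U (D b)))"

definition smooth_on :: "'a::euclidean_space set \<Rightarrow> ('a \<Rightarrow> real) \<Rightarrow> bool" where
  "smooth_on U f \<longleftrightarrow> (\<forall>k. ck_on k U f)"

definition S2 :: "(real^3) set" where
  "S2 = {x. norm x = 1}"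

definition S3 :: "(complex^2) set" where
  "S3 = {z. norm z = 1}"

definition amb_grad :: "(real^3 \<Rightarrow> real) \<Rightarrow> real^3 \<Rightarrow> real^3" where
  "amb_grad f x = (THE g. GDERIV f x :> g)"

definition sph_grad :: "(real^3 \<Rightarrow> real) \<Rightarrow> real^3 \<Rightarrow> real^3" where
  "sph_grad f x = amb_grad f x - (amb_grad f x \<bullet> x) *\<^sub>R x"

definition crit_S2 :: "(real^3 \<Rightarrow> real) \<Rightarrow> real^3 \<Rightarrow> bool" where
  "crit_S2 f p \<longleftrightarrow> p \<in> S2 \<and> sph_grad f p = 0"

definition sph_curve :: "real^3 \<Rightarrow> real^3 \<Rightarrow> real \<Rightarrow> real^3" where
  "sph_curve p v t = (1 / norm (p + t *\<^sub>R v)) *\<^sub>R (p + t *\<^sub>R v)"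

text \<open>Hessian quadratic form at a critical point p (intrinsic at critical points).\<close>
definition hess_quad :: "(real^3 \<Rightarrow> real) \<Rightarrow> real^3 \<Rightarrow> real^3 \<Rightarrow> real" where
  "hess_quad f p v = deriv (deriv (\<lambda>t. f (sph_curve p v t))) 0"

definition hess_form :: "(real^3 \<Rightarrow> real) \<Rightarrow> real^3 \<Rightarrow> real^3 \<Rightarrow> real^3 \<Rightarrow> real" where
  "hess_form f p v w = (hess_quad f p (v + w) - hess_quad f p (v - w)) / 4"

definition nondeg_crit_S2 :: "(real^3 \<Rightarrow> real) \<Rightarrow> real^3 \<Rightarrow> bool" where
  "nondeg_crit_S2 f p \<longleftrightarrow> crit_S2 f p \<and>
     (\<forall>v. v \<bullet> p = 0 \<and> v \<noteq> 0 \<longrightarrow> (\<exists>w. w \<bullet> p = 0 \<and> hess_form f p v w \<noteq> 0))"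

definition saddle_S2 :: "(real^3 \<Rightarrow> real) \<Rightarrow> real^3 \<Rightarrow> bool" where
  "saddle_S2 f p \<longleftrightarrow> nondeg_crit_S2 f p \<and>
     (\<exists>v w. v \<bullet> p = 0 \<and> w \<bullet> p = 0 \<and> hess_quad f p v < 0 \<and> 0 < hess_quad f p w)"

definition morse_S2 :: "(real^3 \<Rightarrow> real) \<Rightarrow> bool" where
  "morse_S2 f \<longleftrightarrow> (\<forall>p. crit_S2 f p \<longrightarrow> nondeg_crit_S2 f p)"

definition grad_flow_line :: "(real^3 \<Rightarrow> real) \<Rightarrow> (real \<Rightarrow> real^3) \<Rightarrow> bool" where
  "grad_flow_line f c \<longleftrightarrow>
     (\<forall>t. c t \<in> S2 \<and> (c has_vector_derivative sph_grad f (c t)) (at t))"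

text \<open>Morse--Smale (round metric) on the 2-sphere: Morse, and stable/unstable manifolds
  intersect transversally; in dimension 2 the only possible failure of transversality is a
  non-constant gradient flow line from a saddle to a saddle.\<close>
definition morse_smale_S2 :: "(real^3 \<Rightarrow> real) \<Rightarrow> bool" where
  "morse_smale_S2 f \<longleftrightarrow> morse_S2 f \<and>
     (\<nexists>c p q. grad_flow_line f c \<and> \<not> crit_S2 f (c 0) \<and> saddle_S2 f p \<and> saddle_S2 f q
              \<and> (c \<longlongrightarrow> p) at_bot \<and> (c \<longlongrightarrow> q) at_top)"

definition cadjoint :: "complex^2^2 \<Rightarrow> complex^2^2" where
  "cadjoint A = (\<chi> i j. cnj (A $ j $ i))"

definition SU2 :: "(complex^2^2) set" where
  "SU2 = {A. cadjoint A ** A = mat 1 \<and> det A = 1}"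

text \<open>Identification of R^3 with traceless Hermitian 2x2 matrices (Pauli matrices).\<close>
definition sigma :: "real^3 \<Rightarrow> complex^2^2" where
  "sigma v = (\<chi> i j.
     if i = 1 \<and> j = 1 then complex_of_real (v $ 3)
     else if i = 1 \<and> j = 2 then Complex (v $ 1) (- (v $ 2))
     else if i = 2 \<and> j = 1 then Complex (v $ 1) (v $ 2)
     else complex_of_real (- (v $ 3)))"

definition unsigma :: "complex^2^2 \<Rightarrow> real^3" where
  "unsigma X = vector [Re (X $ 2 $ 1), Im (X $ 2 $ 1), Re (X $ 1 $ 1)]"

definition rotP :: "complex^2^2 \<Rightarrow> real^3 \<Rightarrow> real^3" where
  "rotP g v = unsigma (g ** sigma v ** cadjoint g)"

text \<open>Hopf fibration, equivariant: hopf (g *v z) = rotP g (hopf z).\<close>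
definition hopf :: "complex^2 \<Rightarrow> real^3" where
  "hopf z = vector [2 * Re (cnj (z $ 1) * z $ 2), 2 * Im (cnj (z $ 1) * z $ 2),
                    (cmod (z $ 1))\<^sup>2 - (cmod (z $ 2))\<^sup>2]"

definition isotropy :: "(real^3 \<Rightarrow> real^3) set \<Rightarrow> real^3 \<Rightarrow> (real^3 \<Rightarrow> real^3) set" where
  "isotropy H p = {h \<in> H. h p = p}"

definition Fix :: "(real^3 \<Rightarrow> real^3) set \<Rightarrow> (real^3) set" where
  "Fix H = {p \<in> S2. card (isotropy H p) > 1}"

definition finite_subgroup_SU2 :: "(complex^2^2) set \<Rightarrow> bool" where
  "finite_subgroup_SU2 G \<longleftrightarrow> G \<subseteq> SU2 \<and> finite G \<and> mat 1 \<in> G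
     \<and> (\<forall>a\<in>G. \<forall>b\<in>G. a ** b \<in> G) \<and> (\<forall>a\<in>G. matrix_inv a \<in> G)"

text \<open>pi_G: a point of S3/G is represented as its G-orbit.\<close>
definition piG :: "(complex^2^2) set \<Rightarrow> complex^2 \<Rightarrow> (complex^2) set" where
  "piG G z = {g *v z | g. g \<in> G}"

definition gamma_orbit :: "(real^3 \<Rightarrow> real) \<Rightarrow> real \<Rightarrow> complex^2 \<Rightarrow> real \<Rightarrow> complex^2" where
  "gamma_orbit f \<epsilon> z t = cis (t / (1 + \<epsilon> * f (hopf z))) *s z"

text \<open>A closed orbit gamma : [0,T] -> X is the m-fold iterate of an embedded closed orbit
  (of period T/m).\<close>
definition is_m_fold_iterate :: "(real \<Rightarrow> 'x) \<Rightarrow> real \<Rightarrow> nat \<Rightarrow> bool" where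
  "is_m_fold_iterate \<gamma> T m \<longleftrightarrow> m > 0 \<and>
     (\<forall>t. 0 \<le> t \<and> t + T / real m \<le> T \<longrightarrow> \<gamma> (t + T / real m) = \<gamma> t) \<and>
     inj_on \<gamma> {0..<T / real m}"

end

theory Submission
  imports Defs "HOL-Library.Real_Mod"
begin

(* The Reeb orbit over p is the Hopf circle t \<mapsto> e^(it/c) z with c = 1 + \<epsilon> f(p); small \<epsilon>
   only serves to make c positive. Its image in S^3/G first closes up after rotating by the
   smallest phase w with g z = w z for some g \<in> G. These phases form a finite subgroup of the
   unit circle, isomorphic to the group S of elements of G preserving the Hopf fibre of z,
   so the multiplicity is |S|, and P maps S onto H_p by equivariance of the Hopf map.
   Since ker P = {\<plusminus>Id} and -Id is the only element of order 2 in SU(2), -Id lies in G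
   exactly when |G| is even; then |S| = 2|H_p|, and otherwise P is injective on S.
   The argument applies at every point of S^2. *)

section \<open>Two-by-two complex matrices and SU(2)\<close>

lemma matrix_vector_mult_2: "((A::complex^2^2) *v x) $ i = A$i$1 * x$1 + A$i$2 * x$2"
  by (simp add: matrix_vector_mult_def sum_2)

lemma matrix_matrix_mult_2: "((A::complex^2^2) ** B) $ i $ j = A$i$1 * B$1$j + A$i$2 * B$2$j"
  by (simp add: matrix_matrix_mult_def sum_2)

lemma cadjoint_component: "cadjoint A $ i $ j = cnj (A $ j $ i)"
  by (simp add: cadjoint_def)

lemma vec2_eq_iff: "(x::complex^2) = y \<longleftrightarrow> x$1 = y$1 \<and> x$2 = y$2"
  by (auto simp: vec_eq_iff forall_2)

lemma vec3_eq_iff: "(x::real^3) = y \<longleftrightarrow> x$1 = y$1 \<and> x$2 = y$2 \<and> x$3 = y$3"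
  by (auto simp: vec_eq_iff forall_3)

lemma mat2_eq_iff:
  "(A::complex^2^2) = B \<longleftrightarrow> A$1$1 = B$1$1 \<and> A$1$2 = B$1$2 \<and> A$2$1 = B$2$1 \<and> A$2$2 = B$2$2"
  by (auto simp: vec_eq_iff forall_2)

lemma mat1_component_2:
  "(mat 1 :: complex^2^2)$1$1 = 1" "(mat 1 :: complex^2^2)$2$2 = 1"
  "(mat 1 :: complex^2^2)$1$2 = 0" "(mat 1 :: complex^2^2)$2$1 = 0"
  by (simp_all add: mat_def)

lemma matrix_vector_mult_smult: "(g::complex^2^2) *v (c *s z) = c *s (g *v z)"
  by (simp add: vec2_eq_iff matrix_vector_mult_2 algebra_simps)

lemma uminus_matrix_vector_mult: "(- (g::complex^2^2)) *v z = - (g *v z)"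
  by (simp add: vec2_eq_iff matrix_vector_mult_2)

lemma uminus_matrix_matrix_mult: "(- (A::complex^2^2)) ** (B::complex^2^2) = - (A ** B)"
  unfolding mat2_eq_iff by (simp add: matrix_matrix_mult_2)

lemma norm_complex2: "norm (z::complex^2) = sqrt ((cmod (z$1))\<^sup>2 + (cmod (z$2))\<^sup>2)"
  by (simp add: norm_vec_def L2_set_def sum_2)

lemma norm_complex2_eq_iff:
  "norm (u::complex^2) = norm (z::complex^2) \<longleftrightarrow>
   u$1 * cnj (u$1) + u$2 * cnj (u$2) = z$1 * cnj (z$1) + z$2 * cnj (z$2)"
proof -
  have "norm u = norm z \<longleftrightarrow>
      complex_of_real ((cmod (u$1))\<^sup>2 + (cmod (u$2))\<^sup>2) = complex_of_real ((cmod (z$1))\<^sup>2 + (cmod (z$2))\<^sup>2)"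
    unfolding norm_complex2 of_real_eq_iff by simp
  then show ?thesis
    unfolding of_real_add complex_norm_square .
qed

lemma norm_complex2_eq_1: "norm (z::complex^2) = 1 \<Longrightarrow> z$1 * cnj (z$1) + z$2 * cnj (z$2) = 1"
  using norm_complex2_eq_iff[of z "\<chi> i. if i = 1 then 1 else 0"] by (simp add: norm_complex2)

lemma norm_smult_complex2: "norm (w *s (z::complex^2)) = cmod w * norm z"
  by (simp add: norm_complex2 norm_mult power_mult_distrib real_sqrt_mult flip: distrib_left)

lemma SU2_entries:
  assumes "g \<in> SU2"
  shows "g$2$1 = - cnj (g$1$2)" "g$2$2 = cnj (g$1$1)"
    "g$1$1 * cnj (g$1$1) + g$1$2 * cnj (g$1$2) = 1"
proof -
  define a b c d where "a = g$1$1" "b = g$1$2" "c = g$2$1" "d = g$2$2"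
  have unitary: "cadjoint g ** g = mat 1" and det: "a * d - b * c = 1"
    using assms by (auto simp: SU2_def det_2 a_b_c_d_def)
  have col1: "cnj a * a + cnj c * c = 1" and col12: "cnj a * b + cnj c * d = 0"
    using arg_cong[OF unitary, of "\<lambda>M. M$1$1"] arg_cong[OF unitary, of "\<lambda>M. M$1$2"]
    by (simp_all add: matrix_matrix_mult_2 cadjoint_component mat1_component_2 a_b_c_d_def)
  \<comment> \<open>Unitarity and \<open>det g = 1\<close> identify the adjoint of g with its adjugate.\<close>
  have "d * (cnj a * a + cnj c * c) - c * (cnj a * b + cnj c * d) = cnj a * (a * d - b * c)"
    by (simp add: algebra_simps)
  then have d: "d = cnj a" using col1 col12 det by simp
  have "a * (cnj a * b + cnj c * d) - b * (cnj a * a + cnj c * c) = cnj c * (a * d - b * c)"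
    by (simp add: algebra_simps)
  then have "cnj c = - b" using col1 col12 det by simp
  then have c: "c = - cnj b" by (metis complex_cnj_cnj complex_cnj_minus)
  show "g$2$1 = - cnj (g$1$2)" "g$2$2 = cnj (g$1$1)" using c d by (simp_all add: a_b_c_d_def)
  show "g$1$1 * cnj (g$1$1) + g$1$2 * cnj (g$1$2) = 1"
    using col1 c by (simp add: a_b_c_d_def algebra_simps)
qed

lemma SU2_matrix_vector_mult:
  assumes "g \<in> SU2"
  shows "(g *v z)$1 = g$1$1 * z$1 + g$1$2 * z$2"
    "(g *v z)$2 = - cnj (g$1$2) * z$1 + cnj (g$1$1) * z$2"
  using SU2_entries[OF assms] by (simp_all add: matrix_vector_mult_2)

lemma norm_SU2_mult:
  assumes "g \<in> SU2"
  shows "norm (g *v z) = norm z"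
proof -
  define a b where "a = g$1$1" "b = g$1$2"
  have "(a * z$1 + b * z$2) * cnj (a * z$1 + b * z$2)
      + (- cnj b * z$1 + cnj a * z$2) * cnj (- cnj b * z$1 + cnj a * z$2)
     = (a * cnj a + b * cnj b) * (z$1 * cnj (z$1) + z$2 * cnj (z$2))"
    by (simp add: algebra_simps)
  then show ?thesis
    using SU2_entries(3)[OF assms]
    unfolding norm_complex2_eq_iff SU2_matrix_vector_mult[OF assms] a_b_def[symmetric] by simp
qed

lemma SU2_mult_cadjoint: "g \<in> SU2 \<Longrightarrow> g ** cadjoint g = mat 1"
  using SU2_entries[of g]
  by (simp add: mat2_eq_iff matrix_matrix_mult_2 cadjoint_component mat1_component_2 algebra_simps)

lemma SU2_matrix_inv:
  assumes "g \<in> SU2"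
  shows "g ** matrix_inv g = mat 1" "matrix_inv g ** g = mat 1"
proof -
  have "\<exists>g'. g ** g' = mat 1 \<and> g' ** g = mat 1"
    using assms SU2_mult_cadjoint by (auto simp: SU2_def)
  then have "g ** matrix_inv g = mat 1 \<and> matrix_inv g ** g = mat 1"
    unfolding matrix_inv_def by (rule someI_ex)
  then show "g ** matrix_inv g = mat 1" "matrix_inv g ** g = mat 1" by auto
qed

lemma uminus_SU2: "g \<in> SU2 \<Longrightarrow> - g \<in> SU2"
  unfolding SU2_def by (auto simp: mat2_eq_iff matrix_matrix_mult_2 cadjoint_component det_2 mat1_component_2)

lemma SU2_neq_uminus: "g \<in> SU2 \<Longrightarrow> g \<noteq> - g"
proof
  assume g: "g \<in> SU2" "g = - g"
  then have "g$i$j = - (g$i$j)" for i j by (metis vector_uminus_component)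
  then have "g$i$j = 0" for i j by (simp add: complex_eq_iff)
  then have "det g = 0" by (simp add: det_2)
  with g show False by (simp add: SU2_def)
qed

lemma rotP_uminus: "rotP (- g) = rotP g"
proof -
  have "(- g) ** X ** cadjoint (- g) = g ** X ** cadjoint g" for X
    by (simp add: mat2_eq_iff matrix_matrix_mult_2 cadjoint_component algebra_simps)
  then show ?thesis unfolding rotP_def by simp
qed

lemma SU2_eq_if_mult_eq:
  assumes g: "g \<in> SU2" and h: "h \<in> SU2" and z: "norm z = 1" and eq: "g *v z = h *v z"
  shows "g = h"
proof -
  define \<alpha> \<beta> where "\<alpha> = g$1$1 - h$1$1" "\<beta> = g$1$2 - h$1$2"
  have e1: "\<alpha> * z$1 + \<beta> * z$2 = 0" and e2: "- cnj \<beta> * z$1 + cnj \<alpha> * z$2 = 0"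
    using arg_cong[OF eq, of "\<lambda>v. v$1"] arg_cong[OF eq, of "\<lambda>v. v$2"]
    unfolding SU2_matrix_vector_mult[OF g] SU2_matrix_vector_mult[OF h] \<alpha>_\<beta>_def
    by (simp_all add: algebra_simps)
  have e2': "- \<beta> * cnj (z$1) + \<alpha> * cnj (z$2) = 0" using arg_cong[OF e2, of cnj] by simp
  have "\<alpha> * (z$1 * cnj (z$1) + z$2 * cnj (z$2))
      = cnj (z$1) * (\<alpha> * z$1 + \<beta> * z$2) + z$2 * (- \<beta> * cnj (z$1) + \<alpha> * cnj (z$2))"
    by (simp add: algebra_simps)
  then have "\<alpha> = 0" using e1 e2' norm_complex2_eq_1[OF z] by simp
  have "\<beta> * (z$1 * cnj (z$1) + z$2 * cnj (z$2))
      = cnj (z$2) * (\<alpha> * z$1 + \<beta> * z$2) - z$1 * (- \<beta> * cnj (z$1) + \<alpha> * cnj (z$2))"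
    by (simp add: algebra_simps)
  then have "\<beta> = 0" using e1 e2' norm_complex2_eq_1[OF z] by simp
  with \<open>\<alpha> = 0\<close> show ?thesis
    unfolding mat2_eq_iff SU2_entries[OF g] SU2_entries[OF h] \<alpha>_\<beta>_def by simp
qed

lemma SU2_square_eq_id:
  assumes g: "g \<in> SU2" and sq: "g ** g = mat 1"
  shows "g = mat 1 \<or> g = - mat 1"
proof -
  define a b where "a = g$1$1" "b = g$1$2"
  have unit: "a * cnj a + b * cnj b = 1" using SU2_entries(3)[OF g] by (simp add: a_b_def)
  have e11: "a * a - b * cnj b = 1" and e12: "b * (a + cnj a) = 0"
    using arg_cong[OF sq, of "\<lambda>M. M$1$1"] arg_cong[OF sq, of "\<lambda>M. M$1$2"]
    unfolding matrix_matrix_mult_2 SU2_entries[OF g] a_b_def[symmetric] mat1_component_2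
    by (simp_all add: algebra_simps)
  have "b = 0"
  proof (rule ccontr)
    assume "b \<noteq> 0"
    then have "cnj a = - a" using e12 by (simp add: eq_neg_iff_add_eq_0 add.commute)
    then have "(a * a - b * cnj b) + (a * cnj a + b * cnj b) = 0" by simp
    then show False using e11 unit by simp
  qed
  then have "a = 1 \<or> a = -1" using e11 by (metis power2_eq_1_iff power2_eq_square diff_zero mult_zero_left)
  have g12: "g$1$2 = 0" using \<open>b = 0\<close> by (simp add: a_b_def)
  show ?thesis
  proof (cases "a = 1")
    case True
    then have "g$1$1 = 1" by (simp add: a_b_def)
    then show ?thesis
      unfolding mat2_eq_iff SU2_entries[OF g] g12 mat1_component_2 by simp
  next
    case False
    then have "g$1$1 = -1" using \<open>a = 1 \<or> a = -1\<close> by (simp add: a_b_def)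
    then show ?thesis
      unfolding mat2_eq_iff SU2_entries[OF g] g12 vector_uminus_component mat1_component_2 by simp
  qed
qed

section \<open>The Hopf map and the double cover P\<close>

lemma hopf_component:
  "hopf z $ 1 = 2 * Re (cnj (z $ 1) * z $ 2)"
  "hopf z $ 2 = 2 * Im (cnj (z $ 1) * z $ 2)"
  "hopf z $ 3 = (cmod (z $ 1))\<^sup>2 - (cmod (z $ 2))\<^sup>2"
  by (simp_all add: hopf_def)

lemma unsigma_component:
  "unsigma X $ 1 = Re (X $ 2 $ 1)" "unsigma X $ 2 = Im (X $ 2 $ 1)" "unsigma X $ 3 = Re (X $ 1 $ 1)"
  by (simp_all add: unsigma_def)

lemma sigma_hopf_component:
  "sigma (hopf z) $ 1 $ 1 = z$1 * cnj (z$1) - z$2 * cnj (z$2)"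
  "sigma (hopf z) $ 1 $ 2 = 2 * z$1 * cnj (z$2)"
  "sigma (hopf z) $ 2 $ 1 = 2 * cnj (z$1) * z$2"
  "sigma (hopf z) $ 2 $ 2 = - (z$1 * cnj (z$1) - z$2 * cnj (z$2))"
proof -
  have diag: "complex_of_real ((cmod (z $ 1))\<^sup>2 - (cmod (z $ 2))\<^sup>2) = z$1 * cnj (z$1) - z$2 * cnj (z$2)"
    unfolding of_real_diff complex_norm_square ..
  show "sigma (hopf z) $ 1 $ 1 = z$1 * cnj (z$1) - z$2 * cnj (z$2)"
    using diag by (simp add: sigma_def hopf_component del: of_real_diff of_real_power)
  have "sigma (hopf z) $ 2 $ 2 = - complex_of_real ((cmod (z $ 1))\<^sup>2 - (cmod (z $ 2))\<^sup>2)"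
    by (simp add: sigma_def hopf_component del: of_real_diff of_real_power)
  then show "sigma (hopf z) $ 2 $ 2 = - (z$1 * cnj (z$1) - z$2 * cnj (z$2))"
    unfolding diag .
  show "sigma (hopf z) $ 1 $ 2 = 2 * z$1 * cnj (z$2)" "sigma (hopf z) $ 2 $ 1 = 2 * cnj (z$1) * z$2"
    by (simp_all add: sigma_def hopf_component complex_eq_iff algebra_simps)
qed

lemma hopf_SU2_mult:
  assumes g: "g \<in> SU2"
  shows "hopf (g *v z) = rotP g (hopf z)"
proof -
  define a b where "a = g$1$1" "b = g$1$2"
  define M where "M = g ** sigma (hopf z) ** cadjoint g"
  have gz1: "(g *v z)$1 = a * z$1 + b * z$2" and gz2: "(g *v z)$2 = - cnj b * z$1 + cnj a * z$2"
    using SU2_matrix_vector_mult[OF g] by (simp_all add: a_b_def)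
  have "M$1$1 = (a * z$1 + b * z$2) * cnj (a * z$1 + b * z$2)
      - (- cnj b * z$1 + cnj a * z$2) * cnj (- cnj b * z$1 + cnj a * z$2)"
    unfolding M_def matrix_matrix_mult_2 cadjoint_component sigma_hopf_component SU2_entries[OF g]
      a_b_def[symmetric]
    by (simp add: algebra_simps)
  also have "\<dots> = complex_of_real ((cmod ((g *v z)$1))\<^sup>2 - (cmod ((g *v z)$2))\<^sup>2)"
    unfolding of_real_diff complex_norm_square gz1 gz2 ..
  finally have M11: "Re (M$1$1) = (cmod ((g *v z)$1))\<^sup>2 - (cmod ((g *v z)$2))\<^sup>2" by simp
  have "M$2$1 = 2 * cnj (a * z$1 + b * z$2) * (- cnj b * z$1 + cnj a * z$2)"
    unfolding M_def matrix_matrix_mult_2 cadjoint_component sigma_hopf_component SU2_entries[OF g]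
      a_b_def[symmetric]
    by (simp add: algebra_simps)
  then have M21: "M$2$1 = 2 * cnj ((g *v z)$1) * (g *v z)$2" unfolding gz1 gz2 .
  show ?thesis
    unfolding vec3_eq_iff rotP_def M_def[symmetric] unsigma_component hopf_component M11 M21 by simp
qed

lemma hopf_smult:
  assumes "cmod w = 1"
  shows "hopf (w *s z) = hopf z"
proof -
  have "cnj w * w = 1" using assms complex_norm_square[of w] by (simp add: mult.commute)
  moreover have "cnj (w * z$1) * (w * z$2) = (cnj w * w) * (cnj (z$1) * z$2)"
    by (simp add: algebra_simps)
  ultimately have off_diag: "cnj (w * z$1) * (w * z$2) = cnj (z$1) * z$2" by simp
  show ?thesis
    unfolding vec3_eq_iff hopf_component vector_smult_component off_diag norm_mult assms by simp
qed

lemma hopf_eq_imp_smult: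
  assumes norm: "norm u = norm z" and z: "z \<noteq> 0" and hopf: "hopf u = hopf z"
  shows "\<exists>w. cmod w = 1 \<and> u = w *s z"
proof -
  have off_diag: "cnj (u$1) * u$2 = cnj (z$1) * z$2"
    using arg_cong[OF hopf, of "\<lambda>v. v$1"] arg_cong[OF hopf, of "\<lambda>v. v$2"]
    by (simp add: hopf_component complex_eq_iff)
  have "(cmod (u$1))\<^sup>2 - (cmod (u$2))\<^sup>2 = (cmod (z$1))\<^sup>2 - (cmod (z$2))\<^sup>2"
    using arg_cong[OF hopf, of "\<lambda>v. v$3"] by (simp add: hopf_component)
  moreover have "(cmod (u$1))\<^sup>2 + (cmod (u$2))\<^sup>2 = (cmod (z$1))\<^sup>2 + (cmod (z$2))\<^sup>2"
    using norm unfolding norm_complex2 by simp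
  ultimately have "(cmod (u$1))\<^sup>2 = (cmod (z$1))\<^sup>2" "(cmod (u$2))\<^sup>2 = (cmod (z$2))\<^sup>2"
    by linarith+
  then have abs1: "cmod (u$1) = cmod (z$1)" and abs2: "cmod (u$2) = cmod (z$2)"
    by (simp_all add: power2_eq_iff_nonneg)
  show ?thesis
  proof (cases "z$1 = 0")
    case False
    define w where "w = u$1 / z$1"
    have "u$1 * cnj (u$1) = z$1 * cnj (z$1)" using abs1 by (metis complex_norm_square)
    then have "z$1 * cnj (z$1) * u$2 = u$1 * cnj (z$1) * z$2"
      using off_diag by (metis mult.assoc)
    then have "z$1 * u$2 = u$1 * z$2" using False by (simp add: mult.commute mult.left_commute)
    then have "u = w *s z" using False by (simp add: vec2_eq_iff w_def field_simps)
    moreover have "cmod w = 1" using abs1 False by (simp add: w_def norm_divide)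
    ultimately show ?thesis by blast
  next
    case True
    then have "z$2 \<noteq> 0" using z by (simp add: vec2_eq_iff)
    define w where "w = u$2 / z$2"
    have "u = w *s z" using True abs1 \<open>z$2 \<noteq> 0\<close> by (simp add: vec2_eq_iff w_def)
    moreover have "cmod w = 1" using abs2 \<open>z$2 \<noteq> 0\<close> by (simp add: w_def norm_divide)
    ultimately show ?thesis by blast
  qed
qed

text \<open>The quaternionic structure of \<open>\<complex>\<^sup>2 = \<bbbH>\<close> (right multiplication by j).\<close>
definition quat_j :: "complex^2 \<Rightarrow> complex^2" where
  "quat_j x = (\<chi> i. if i = 1 then - cnj (x$2) else cnj (x$1))"

lemma quat_j_component: "quat_j x $ 1 = - cnj (x$2)" "quat_j x $ 2 = cnj (x$1)"
  by (simp_all add: quat_j_def)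

lemma SU2_mult_quat_j: "g \<in> SU2 \<Longrightarrow> g *v quat_j x = quat_j (g *v x)"
  unfolding vec2_eq_iff quat_j_component SU2_matrix_vector_mult by (simp add: algebra_simps)

lemma quat_j_smult: "quat_j (w *s x) = cnj w *s quat_j x"
  unfolding vec2_eq_iff vector_smult_component quat_j_component by simp

lemma smult_add_smult_quat_j_eq_0:
  assumes z: "norm z = 1" and eq: "\<alpha> *s z + \<beta> *s quat_j z = 0"
  shows "\<alpha> = 0" "\<beta> = 0"
proof -
  have e1: "\<alpha> * z$1 - \<beta> * cnj (z$2) = 0" and e2: "\<alpha> * z$2 + \<beta> * cnj (z$1) = 0"
    using arg_cong[OF eq, of "\<lambda>v. v$1"] arg_cong[OF eq, of "\<lambda>v. v$2"]
    by (simp_all add: quat_j_component)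
  have "\<alpha> * (z$1 * cnj (z$1) + z$2 * cnj (z$2))
      = cnj (z$1) * (\<alpha> * z$1 - \<beta> * cnj (z$2)) + cnj (z$2) * (\<alpha> * z$2 + \<beta> * cnj (z$1))"
    by (simp add: algebra_simps)
  then show "\<alpha> = 0" using norm_complex2_eq_1[OF z] e1 e2 by simp
  have "\<beta> * (z$1 * cnj (z$1) + z$2 * cnj (z$2))
      = z$1 * (\<alpha> * z$2 + \<beta> * cnj (z$1)) - z$2 * (\<alpha> * z$1 - \<beta> * cnj (z$2))"
    by (simp add: algebra_simps)
  then show "\<beta> = 0" using norm_complex2_eq_1[OF z] e1 e2 by simp
qed

lemma rotP_eq_imp_smult:
  assumes g: "g \<in> SU2" and h: "h \<in> SU2" and rot: "rotP g = rotP h" and u: "u \<noteq> 0"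
  shows "\<exists>c. cmod c = 1 \<and> h *v u = c *s (g *v u)"
proof (rule hopf_eq_imp_smult)
  show "norm (h *v u) = norm (g *v u)" using norm_SU2_mult g h by simp
  show "g *v u \<noteq> 0" using norm_SU2_mult[OF g, of u] u by auto
  show "hopf (h *v u) = hopf (g *v u)" using rot hopf_SU2_mult g h by simp
qed

lemma unimodular_real_imp_1_or_minus_1: "cmod c = 1 \<Longrightarrow> cnj c = c \<Longrightarrow> c = 1 \<or> c = -1"
  by (metis Reals_cnj_iff complex_of_real_def norm_of_real abs_1 abs_eq_iff
      of_real_1 of_real_minus Reals_cases)

text \<open>The kernel of P is \<open>{\<plusminus>Id}\<close>: if \<open>P g = P h\<close>, then h maps z and z + j z to unit
  multiples c and d of their g-images; quaternion linearity forces \<open>c = d = cnj c\<close>.\<close>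
lemma rotP_eq_imp_eq_or_uminus:
  assumes g: "g \<in> SU2" and h: "h \<in> SU2" and rot: "rotP g = rotP h"
  shows "h = g \<or> h = - g"
proof -
  define z :: "complex^2" where "z = (\<chi> i. if i = 1 then 1 else 0)"
  have z: "norm z = 1" by (simp add: z_def norm_complex2)
  define y where "y = g *v z"
  have y: "norm y = 1" using norm_SU2_mult[OF g] z by (simp add: y_def)
  have "z \<noteq> 0" using z by auto
  then obtain c where c: "cmod c = 1" "h *v z = c *s y"
    using rotP_eq_imp_smult[OF g h rot] unfolding y_def by blast
  have "z + quat_j z \<noteq> 0"
    using smult_add_smult_quat_j_eq_0[OF z, of 1 1] by auto
  then obtain d where d: "h *v (z + quat_j z) = d *s (g *v (z + quat_j z))"
    using rotP_eq_imp_smult[OF g h rot] by blast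
  have "(c - d) *s y + (cnj c - d) *s quat_j y = 0"
    using d
    unfolding matrix_vector_right_distrib SU2_mult_quat_j[OF g] SU2_mult_quat_j[OF h] c(2)
      quat_j_smult y_def[symmetric]
    by (simp add: vec2_eq_iff algebra_simps)
  then have "c - d = 0" "cnj c - d = 0" by (rule smult_add_smult_quat_j_eq_0[OF y])+
  then have "c = d" "cnj c = d" by simp_all
  then have "c = 1 \<or> c = -1" using unimodular_real_imp_1_or_minus_1 c(1) by simp
  then have "h *v z = g *v z \<or> h *v z = (- g) *v z"
    using c(2) by (auto simp: y_def uminus_matrix_vector_mult vector_smult_lneg)
  then show ?thesis
    using SU2_eq_if_mult_eq[OF h g z] SU2_eq_if_mult_eq[OF h uminus_SU2[OF g] z] by blast
qed

section \<open>Finite subgroups of SU(2)\<close>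

lemma card_eq_twice_card_image:
  assumes A: "finite A" and fibres: "\<forall>x\<in>A. card {y\<in>A. f y = f x} = 2"
  shows "card A = 2 * card (f ` A)"
proof -
  have "card A = (\<Sum>b\<in>f ` A. card {x\<in>A. f x = b})"
    using sum.image_gen[OF A, of "\<lambda>_. 1::nat" f] by simp
  also have "\<dots> = (\<Sum>b\<in>f ` A. 2)"
    using fibres by (intro sum.cong) auto
  finally show ?thesis by simp
qed

lemma even_card_if_involution:
  assumes A: "finite A" and inv: "\<forall>x\<in>A. \<sigma> x \<in> A \<and> \<sigma> (\<sigma> x) = x \<and> \<sigma> x \<noteq> x"
  shows "even (card A)"
proof -
  have "card {y\<in>A. {y, \<sigma> y} = {x, \<sigma> x}} = 2" if x: "x \<in> A" for x
  proof -
    have "{y\<in>A. {y, \<sigma> y} = {x, \<sigma> x}} = {x, \<sigma> x}"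
      using inv x by (auto simp: doubleton_eq_iff)
    moreover have "\<sigma> x \<noteq> x" using inv x by blast
    ultimately show ?thesis by simp
  qed
  then have "card A = 2 * card ((\<lambda>x. {x, \<sigma> x}) ` A)"
    by (intro card_eq_twice_card_image[OF A] ballI)
  then show ?thesis by simp
qed

lemma card_eq_twice_card_rotP_image:
  assumes S: "finite S" "S \<subseteq> SU2" and neg: "\<forall>g\<in>S. - g \<in> S"
  shows "card S = 2 * card (rotP ` S)"
proof (rule card_eq_twice_card_image[OF S(1)], intro ballI)
  fix g assume g: "g \<in> S"
  have "h = g \<or> h = - g" if "h \<in> S" "rotP h = rotP g" for h
    using rotP_eq_imp_eq_or_uminus[of g h] that g S(2) by auto
  then have "{h\<in>S. rotP h = rotP g} = {g, - g}"
    using g neg rotP_uminus by auto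
  moreover have "g \<noteq> - g" using g S(2) SU2_neq_uminus by blast
  ultimately show "card {h\<in>S. rotP h = rotP g} = 2" by simp
qed

lemma inj_on_rotP:
  assumes "S \<subseteq> SU2" "\<forall>g\<in>S. - g \<notin> S"
  shows "inj_on rotP S"
proof (rule inj_onI)
  fix g h assume "g \<in> S" "h \<in> S" "rotP g = rotP h"
  then show "g = h" using rotP_eq_imp_eq_or_uminus[of g h] assms by auto
qed

lemma finite_subgroup_SU2D:
  assumes "finite_subgroup_SU2 G"
  shows "G \<subseteq> SU2" "finite G" "mat 1 \<in> G"
    "\<And>a b. a \<in> G \<Longrightarrow> b \<in> G \<Longrightarrow> a ** b \<in> G" "\<And>a. a \<in> G \<Longrightarrow> matrix_inv a \<in> G"
  using assms by (auto simp: finite_subgroup_SU2_def)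

lemma SU2_matrix_inv_eqI:
  assumes "g \<in> SU2" "g ** h = mat 1"
  shows "matrix_inv g = h"
proof -
  have "matrix_inv g = (matrix_inv g ** g) ** h"
    by (simp add: assms(2) matrix_mul_assoc[symmetric] matrix_mul_rid)
  then show ?thesis by (simp add: SU2_matrix_inv[OF assms(1)] matrix_mul_lid)
qed

text \<open>In one direction negation is a fixed-point-free involution of G; in the other
  inversion is one on \<open>G - {Id}\<close>, since \<open>-Id\<close> is the only element of order 2 in SU(2).\<close>
lemma uminus_id_mem_iff_even_card:
  assumes G: "finite_subgroup_SU2 G"
  shows "- mat 1 \<in> G \<longleftrightarrow> even (card G)"
proof
  note GD = finite_subgroup_SU2D[OF G]
  assume "- mat 1 \<in> G"
  then have "- x \<in> G" if "x \<in> G" for x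
    using GD(4)[OF _ that] by (metis uminus_matrix_matrix_mult matrix_mul_lid)
  then show "even (card G)"
    using GD(1,2) SU2_neq_uminus by (intro even_card_if_involution[of G uminus]) auto
next
  note GD = finite_subgroup_SU2D[OF G]
  assume even: "even (card G)"
  show "- mat 1 \<in> G"
  proof (rule ccontr)
    assume no_neg: "- mat 1 \<notin> G"
    have "even (card (G - {mat 1}))"
    proof (rule even_card_if_involution[of _ matrix_inv])
      show "finite (G - {mat 1})" using GD(2) by simp
      show "\<forall>x\<in>G - {mat 1}. matrix_inv x \<in> G - {mat 1} \<and> matrix_inv (matrix_inv x) = x
          \<and> matrix_inv x \<noteq> x"
      proof
        fix x assume x: "x \<in> G - {mat 1}"
        have xS: "x \<in> SU2" and ixS: "matrix_inv x \<in> SU2" using x GD(1,5) by auto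
        have "matrix_inv (matrix_inv x) = x"
          using SU2_matrix_inv_eqI[OF ixS SU2_matrix_inv(2)[OF xS]] .
        moreover have "matrix_inv x \<noteq> mat 1"
          using x SU2_matrix_inv(1)[OF xS] by (auto simp: matrix_mul_rid)
        moreover have "matrix_inv x \<noteq> x"
          using x no_neg SU2_square_eq_id[OF xS] SU2_matrix_inv(1)[OF xS] by auto
        ultimately show "matrix_inv x \<in> G - {mat 1} \<and> matrix_inv (matrix_inv x) = x
            \<and> matrix_inv x \<noteq> x"
          using x GD(5) by simp
      qed
    qed
    moreover have "card G = Suc (card (G - {mat 1}))"
      using card_Suc_Diff1[OF GD(2,3)] by simp
    ultimately show False using even by simp
  qed
qed

lemma piG_eq_iff:
  assumes G: "finite_subgroup_SU2 G"
  shows "piG G x = piG G y \<longleftrightarrow> (\<exists>g\<in>G. x = g *v y)"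
proof
  note GD = finite_subgroup_SU2D[OF G]
  assume "piG G x = piG G y"
  moreover have "x \<in> piG G x"
    using GD(3) unfolding piG_def by (metis (mono_tags, lifting) matrix_vector_mul_lid mem_Collect_eq)
  ultimately show "\<exists>g\<in>G. x = g *v y" unfolding piG_def by blast
next
  note GD = finite_subgroup_SU2D[OF G]
  assume "\<exists>g\<in>G. x = g *v y"
  then obtain g where g: "g \<in> G" "x = g *v y" by blast
  have "h *v x \<in> piG G y" if "h \<in> G" for h
    using GD(4)[OF that g(1)] unfolding piG_def g(2) matrix_vector_mul_assoc by blast
  moreover have "h *v y \<in> piG G x" if "h \<in> G" for h
  proof -
    have "matrix_inv g *v x = y"
      using SU2_matrix_inv(2)[of g] g GD(1) by (auto simp: matrix_vector_mul_assoc)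
    then have "h *v y = (h ** matrix_inv g) *v x"
      by (simp add: matrix_vector_mul_assoc[symmetric])
    then show ?thesis using GD(4)[OF that GD(5)[OF g(1)]] unfolding piG_def by blast
  qed
  ultimately show "piG G x = piG G y" unfolding piG_def by blast
qed

section \<open>Reeb orbits in the quotient\<close>

definition fibre_stabilizer :: "(complex^2^2) set \<Rightarrow> complex^2 \<Rightarrow> (complex^2^2) set" where
  "fibre_stabilizer G z = {g\<in>G. \<exists>w. g *v z = w *s z}"

definition fibre_phases :: "(complex^2^2) set \<Rightarrow> complex^2 \<Rightarrow> complex set" where
  "fibre_phases G z = {w. \<exists>g\<in>G. g *v z = w *s z}"

lemma SU2_mult_eq_smult_imp_unimodular:
  assumes "g \<in> SU2" "norm z = 1" "g *v z = w *s z"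
  shows "cmod w = 1"
  using norm_SU2_mult[OF assms(1), of z] assms(2,3) by (simp add: norm_smult_complex2)

lemma isotropy_hopf_eq_image_fibre_stabilizer:
  assumes G: "finite_subgroup_SU2 G" and z: "norm z = 1"
  shows "isotropy (rotP ` G) (hopf z) = rotP ` fibre_stabilizer G z"
proof -
  note GD = finite_subgroup_SU2D[OF G]
  have "rotP g (hopf z) = hopf z \<longleftrightarrow> (\<exists>w. g *v z = w *s z)" if g: "g \<in> G" for g
  proof
    have gS: "g \<in> SU2" using g GD(1) by blast
    assume "rotP g (hopf z) = hopf z"
    then have "hopf (g *v z) = hopf z" by (simp add: hopf_SU2_mult[OF gS])
    moreover have "norm (g *v z) = norm z" by (rule norm_SU2_mult[OF gS])
    moreover have "z \<noteq> 0" using z by auto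
    ultimately show "\<exists>w. g *v z = w *s z" using hopf_eq_imp_smult by blast
  next
    have gS: "g \<in> SU2" using g GD(1) by blast
    assume "\<exists>w. g *v z = w *s z"
    then obtain w where w: "g *v z = w *s z" by blast
    then have "cmod w = 1" by (rule SU2_mult_eq_smult_imp_unimodular[OF gS z])
    then show "rotP g (hopf z) = hopf z"
      using w hopf_smult by (simp flip: hopf_SU2_mult[OF gS])
  qed
  then show ?thesis
    unfolding isotropy_def fibre_stabilizer_def by auto
qed

lemma finite_fibre_stabilizer: "finite G \<Longrightarrow> finite (fibre_stabilizer G z)"
  by (simp add: fibre_stabilizer_def)

lemma card_fibre_stabilizer:
  fixes z :: "complex^2"
  assumes G: "finite_subgroup_SU2 G"
  defines "S \<equiv> fibre_stabilizer G z"
  shows "card S = (if even (card G) then 2 * card (rotP ` S) else card (rotP ` S))"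
proof -
  note GD = finite_subgroup_SU2D[OF G]
  have S: "finite S" "S \<subseteq> G" "S \<subseteq> SU2"
    using GD(1,2) finite_fibre_stabilizer by (auto simp: S_def fibre_stabilizer_def)
  show ?thesis
  proof (cases "even (card G)")
    case True
    then have neg: "- mat 1 \<in> G" using uminus_id_mem_iff_even_card[OF G] by simp
    have "- g \<in> S" if gS: "g \<in> S" for g
    proof -
      obtain w where g: "g \<in> G" "g *v z = w *s z"
        using gS by (auto simp: S_def fibre_stabilizer_def)
      have "- g = - mat 1 ** g" by (simp add: uminus_matrix_matrix_mult matrix_mul_lid)
      then have "- g \<in> G" using GD(4)[OF neg g(1)] by simp
      moreover have "(- g) *v z = (- w) *s z"
        using g(2) by (simp add: uminus_matrix_vector_mult vector_smult_lneg)
      ultimately show ?thesis unfolding S_def fibre_stabilizer_def by blast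
    qed
    then show ?thesis using True card_eq_twice_card_rotP_image[OF S(1,3)] by simp
  next
    case False
    then have no_neg: "- mat 1 \<notin> G" using uminus_id_mem_iff_even_card[OF G] by simp
    have "- g \<notin> S" if g: "g \<in> S" for g
    proof
      assume "- g \<in> S"
      then have "(- g) ** matrix_inv g \<in> G" using g S(2) GD(4,5) by blast
      moreover have "(- g) ** matrix_inv g = - mat 1"
        using g S(3) by (auto simp: uminus_matrix_matrix_mult SU2_matrix_inv(1))
      ultimately show False using no_neg by simp
    qed
    then show ?thesis using False inj_on_rotP[OF S(3)] by (simp add: card_image)
  qed
qed

text \<open>The phase of g is recovered from g z through the Hermitian product with z.\<close>
lemma card_fibre_phases:
  assumes G: "finite_subgroup_SU2 G" and z: "norm z = 1"
  shows "finite (fibre_phases G z)" "card (fibre_phases G z) = card (fibre_stabilizer G z)"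
proof -
  note GD = finite_subgroup_SU2D[OF G]
  define phase where "phase g = cnj (z$1) * (g *v z)$1 + cnj (z$2) * (g *v z)$2" for g :: "complex^2^2"
  have phase: "phase g = w" if "g *v z = w *s z" for g w
  proof -
    have "phase g = w * (z$1 * cnj (z$1) + z$2 * cnj (z$2))"
      using that by (simp add: phase_def algebra_simps)
    then show ?thesis using norm_complex2_eq_1[OF z] by simp
  qed
  have "fibre_phases G z = phase ` fibre_stabilizer G z"
    using phase by (auto simp: fibre_phases_def fibre_stabilizer_def image_iff)
  moreover have "inj_on phase (fibre_stabilizer G z)"
  proof (rule inj_onI)
    fix g h assume g: "g \<in> fibre_stabilizer G z" and h: "h \<in> fibre_stabilizer G z"
      and "phase g = phase h"
    then have "g *v z = h *v z" using phase by (auto simp: fibre_stabilizer_def)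
    then show "g = h" using g h SU2_eq_if_mult_eq z GD(1) by (auto simp: fibre_stabilizer_def)
  qed
  moreover have "finite (fibre_stabilizer G z)" by (rule finite_fibre_stabilizer[OF GD(2)])
  ultimately show "finite (fibre_phases G z)" "card (fibre_phases G z) = card (fibre_stabilizer G z)"
    by (simp_all add: card_image)
qed

text \<open>Multiplication by w permutes W, so comparing the products of all elements gives
  \<open>w ^ card W = 1\<close>.\<close>
lemma pow_card_eq_1_if_mult_closed:
  fixes W :: "'a::idom set"
  assumes W: "finite W" "0 \<notin> W" "\<forall>x\<in>W. \<forall>y\<in>W. x * y \<in> W" and w: "w \<in> W"
  shows "w ^ card W = 1"
proof -
  have inj: "inj_on ((*) w) W" using w W(2) by (auto intro: inj_onI)
  have "(*) w ` W = W"
    using W(1,3) w by (intro card_subset_eq) (auto simp: card_image[OF inj])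
  then have "\<Prod>W = (\<Prod>x\<in>W. w * x)"
    using prod.reindex[OF inj, of id] by simp
  also have "\<dots> = w ^ card W * \<Prod>W" by (simp add: prod.distrib)
  finally have "\<Prod>W * 1 = \<Prod>W * w ^ card W" by (simp add: mult.commute)
  moreover have "\<Prod>W \<noteq> 0" using W(1,2) by simp
  ultimately show ?thesis by (metis mult_left_cancel)
qed

lemma mult_closed_eq_roots_unity:
  fixes W :: "complex set"
  assumes W: "finite W" "W \<noteq> {}" "0 \<notin> W" "\<forall>x\<in>W. \<forall>y\<in>W. x * y \<in> W"
  shows "W = {x. x ^ card W = 1}"
proof (rule card_subset_eq)
  have "card W > 0" using W(1,2) by (simp add: card_gt_0_iff)
  then show "finite {x::complex. x ^ card W = 1}" "card W = card {x::complex. x ^ card W = 1}"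
    by (simp_all add: finite_roots_unity card_roots_unity_eq)
  show "W \<subseteq> {x. x ^ card W = 1}" using pow_card_eq_1_if_mult_closed[OF W(1,3,4)] by blast
qed

lemma fibre_phases_eq_roots_unity:
  assumes G: "finite_subgroup_SU2 G" and z: "norm z = 1"
  shows "fibre_phases G z = {x. x ^ card (fibre_stabilizer G z) = 1}"
proof -
  note GD = finite_subgroup_SU2D[OF G]
  have "1 \<in> fibre_phases G z" using GD(3) by (force simp: fibre_phases_def matrix_vector_mul_lid)
  moreover have "0 \<notin> fibre_phases G z"
    using GD(1) SU2_mult_eq_smult_imp_unimodular[OF _ z] by (force simp: fibre_phases_def)
  moreover have "v * w \<in> fibre_phases G z"
    if vw: "v \<in> fibre_phases G z" "w \<in> fibre_phases G z" for v w
  proof -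
    obtain g h where "g \<in> G" "h \<in> G" "g *v z = v *s z" "h *v z = w *s z"
      using vw by (auto simp: fibre_phases_def)
    then have "g ** h \<in> G" "(g ** h) *v z = (v * w) *s z"
      by (simp_all add: GD(4) matrix_vector_mul_assoc[symmetric] matrix_vector_mult_smult
          vector_smult_assoc mult.commute)
    then show ?thesis by (auto simp: fibre_phases_def)
  qed
  ultimately show ?thesis
    using mult_closed_eq_roots_unity[OF card_fibre_phases(1)[OF G z]] card_fibre_phases(2)[OF G z]
    by auto
qed

lemma piG_cis_smult_eq_iff:
  assumes G: "finite_subgroup_SU2 G"
  shows "piG G (cis a *s z) = piG G (cis b *s z) \<longleftrightarrow> cis (a - b) \<in> fibre_phases G z"
proof -
  have "cis a *s z = g *v (cis b *s z) \<longleftrightarrow> g *v z = cis (a - b) *s z" for g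
  proof -
    have "cis a *s z = cis b *s (cis (a - b) *s z)" by (simp add: vector_smult_assoc cis_mult)
    then show ?thesis
      unfolding matrix_vector_mult_smult by (simp only: vector_mul_lcancel cis_neq_zero) auto
  qed
  then show ?thesis
    unfolding piG_eq_iff[OF G] fibre_phases_def by auto
qed

lemma is_m_fold_iterate_if_cis_pow:
  assumes m: "m > 0" and c: "c > 0"
    and \<gamma>: "\<And>s t. \<gamma> s = \<gamma> t \<longleftrightarrow> cis ((s - t) / c) ^ m = 1"
  shows "is_m_fold_iterate \<gamma> (2 * pi * c) m"
  unfolding is_m_fold_iterate_def
proof (intro conjI allI impI)
  show "m > 0" by fact
  fix t
  have "(t + 2 * pi * c / real m - t) / c = 2 * pi / real m" using c by simp
  then have "cis ((t + 2 * pi * c / real m - t) / c) ^ m = cis (real m * (2 * pi / real m))"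
    by (simp only: Complex.DeMoivre)
  also have "\<dots> = 1" using m by simp
  finally show "\<gamma> (t + 2 * pi * c / real m) = \<gamma> t" using \<gamma> by simp
next
  show "inj_on \<gamma> {0..<2 * pi * c / real m}"
  proof (rule inj_onI)
    fix s t assume s: "s \<in> {0..<2 * pi * c / real m}" and t: "t \<in> {0..<2 * pi * c / real m}"
      and eq: "\<gamma> s = \<gamma> t"
    have "\<bar>s - t\<bar> < 2 * pi * c / real m" using s t by auto
    then have "real m * \<bar>s - t\<bar> / c < 2 * pi"
      using m c by (simp add: field_simps)
    then have bound: "\<bar>real m * ((s - t) / c)\<bar> < 2 * pi"
      using c by (simp add: abs_mult abs_divide)
    have "cis (real m * ((s - t) / c)) = 1" using eq \<gamma> by (simp add: Complex.DeMoivre)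
    then obtain n :: int where n: "real m * ((s - t) / c) = of_int n * (2 * pi)"
      using cis_eq_1_iff by blast
    then have "\<bar>of_int n\<bar> * (2 * pi) < 1 * (2 * pi)"
      using bound by (simp add: n abs_mult)
    then have "n = 0" by (simp add: mult_less_cancel_right)
    then show "s = t" using n m c by simp
  qed
qed

lemma Reeb_orbit_multiplicity:
  assumes G: "finite_subgroup_SU2 G" and z: "norm z = 1" and c: "c > 0"
  shows "is_m_fold_iterate (\<lambda>t. piG G (cis (t / c) *s z)) (2 * pi * c)
           (card (fibre_stabilizer G z))"
proof (rule is_m_fold_iterate_if_cis_pow[OF _ c])
  note GD = finite_subgroup_SU2D[OF G]
  have "mat 1 \<in> fibre_stabilizer G z"
    using GD(3) unfolding fibre_stabilizer_def by (auto intro!: exI[of _ 1] simp: matrix_vector_mul_lid)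
  moreover have "finite (fibre_stabilizer G z)" by (rule finite_fibre_stabilizer[OF GD(2)])
  ultimately show "card (fibre_stabilizer G z) > 0" by (auto simp: card_gt_0_iff)
  fix s t
  show "piG G (cis (s / c) *s z) = piG G (cis (t / c) *s z) \<longleftrightarrow>
      cis ((s - t) / c) ^ card (fibre_stabilizer G z) = 1"
    unfolding piG_cis_smult_eq_iff[OF G] fibre_phases_eq_roots_unity[OF G z]
    by (simp add: diff_divide_distrib)
qed

lemma small_perturbation_pos:
  fixes f :: "'a::metric_space \<Rightarrow> real"
  assumes "compact K" "continuous_on K f"
  shows "\<exists>\<epsilon>0>0. \<forall>\<epsilon>. 0 < \<epsilon> \<and> \<epsilon> < \<epsilon>0 \<longrightarrow> (\<forall>x\<in>K. 0 < 1 + \<epsilon> * f x)"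
proof -
  obtain B where B: "B > 0" "\<forall>x\<in>K. \<bar>f x\<bar> \<le> B"
    using compact_imp_bounded[OF compact_continuous_image[OF assms(2,1)]]
    by (auto simp: bounded_pos)
  have "0 < 1 + \<epsilon> * f x" if "0 < \<epsilon>" "\<epsilon> < 1 / B" "x \<in> K" for \<epsilon> x
  proof -
    have "\<bar>\<epsilon> * f x\<bar> \<le> \<epsilon> * B" using that B by (simp add: abs_mult mult_left_mono)
    also have "\<dots> < 1" using that B by (simp add: field_simps)
    finally show ?thesis by linarith
  qed
  then show ?thesis using B(1) by (intro exI[of _ "1 / B"]) auto
qed

theorem lemma3p14:
  fixes G :: "(complex^2^2) set" and f :: "real^3 \<Rightarrow> real" and U :: "(real^3) set"
  assumes "finite_subgroup_SU2 G" and "card G > 1"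
    and "open U" and "S2 \<subseteq> U" and "smooth_on U f"
    and "\<forall>h\<in>rotP ` G. \<forall>x\<in>S2. f (h x) = f x"
    and "morse_smale_S2 f"
    and "{p. crit_S2 f p} = Fix (rotP ` G)"
  shows "\<exists>\<epsilon>0>0. \<forall>\<epsilon>. 0 < \<epsilon> \<and> \<epsilon> < \<epsilon>0 \<longrightarrow>
           (\<forall>p z. crit_S2 f p \<and> z \<in> S3 \<and> hopf z = p \<longrightarrow>
              is_m_fold_iterate (piG G \<circ> gamma_orbit f \<epsilon> z) (2 * pi * (1 + \<epsilon> * f p))
                (if even (card G) then 2 * card (isotropy (rotP ` G) p)
                 else card (isotropy (rotP ` G) p)))"
proof -
  note G = assms(1)
  have "ck_on 0 U f" using assms(5) unfolding smooth_on_def by blast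
  then have "continuous_on S2 f" using assms(4) continuous_on_subset by auto
  moreover have "compact S2"
    using compact_sphere[of "0 :: real^3" 1] by (simp add: S2_def sphere_def dist_norm)
  ultimately obtain \<epsilon>0 where \<epsilon>0: "\<epsilon>0 > 0" and pos: "\<forall>\<epsilon>. 0 < \<epsilon> \<and> \<epsilon> < \<epsilon>0 \<longrightarrow> (\<forall>x\<in>S2. 0 < 1 + \<epsilon> * f x)"
    using small_perturbation_pos by blast
  show ?thesis
  proof (intro exI[of _ \<epsilon>0] conjI allI impI)
    show "\<epsilon>0 > 0" by (fact \<epsilon>0)
    fix \<epsilon> p z assume \<epsilon>: "0 < \<epsilon> \<and> \<epsilon> < \<epsilon>0" and pz: "crit_S2 f p \<and> z \<in> S3 \<and> hopf z = p"
    then have z: "norm z = 1" and p: "p = hopf z" "p \<in> S2"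
      by (auto simp: S3_def crit_S2_def)
    have orbit: "piG G \<circ> gamma_orbit f \<epsilon> z = (\<lambda>t. piG G (cis (t / (1 + \<epsilon> * f p)) *s z))"
      by (auto simp: gamma_orbit_def p)
    have card: "card (fibre_stabilizer G z) = (if even (card G) then 2 * card (isotropy (rotP ` G) p)
        else card (isotropy (rotP ` G) p))"
      unfolding p(1) isotropy_hopf_eq_image_fibre_stabilizer[OF G z] by (rule card_fibre_stabilizer[OF G])
    have "0 < 1 + \<epsilon> * f p" using pos \<epsilon> p(2) by blast
    then show "is_m_fold_iterate (piG G \<circ> gamma_orbit f \<epsilon> z) (2 * pi * (1 + \<epsilon> * f p))
        (if even (card G) then 2 * card (isotropy (rotP ` G) p) else card (isotropy (rotP ` G) p))"
      unfolding orbit card[symmetric] by (rule Reeb_orbit_multiplicity[OF G z])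
  qed
qed

end
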